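(* Let $\rho:F_2=\langle a,b\rangle\to PSL(2,\mathbb{C})$ be an irreducible representation with principal character $(\gamma,0,-4)$ (so $\rho(a)$ is parabolic and $\rho(b)$ is elliptic of order two), and let $w$ be a good word. Then $(p_w(\gamma),0,-4)$ is the principal character of a representation $\rho_w:F_2\to PSL(2,\mathbb{C})$, and $\rho_w$ is discrete (i.e. $\rho_w(F_2)$ is a discrete subgroup) if $\rho$ is.
   Context: For $\rho:F_2\to PSL(2,\mathbb{C})$ the principal character is $(\operatorname{tr}[\rho(a),\rho(b)]-2,\ \operatorname{tr}^2\rho(a)-4,\ \operatorname{tr}^2\rho(b)-4)$. For $x,y\in PSL(2,\mathbb{C})$ write $\gamma(x,y)=\operatorname{tr}[x,y]-2$. A good word is a reduced word $w=a^{m_1}ba^{m_2}b\cdots ba^{m_n}$ in the group $\langle a,b\mid b^2=1\rangle\cong\mathbb{Z}*\mathbb{Z}_2$ with $n\ge 3$ (at least two occurrences of $b$) and $m_i\neq0$ for $2\le i\le n-1$. For a good word $w$, $p_w\in\mathbb{Z}[z]$ denotes the word polynomial: the unique (monic, integer) polynomial such that for every parabolic $f\in PSL(2,\mathbb{C})$ and every elliptic $\phi\in PSL(2,\mathbb{C})$ of order two, $\gamma(f,w(f,\phi))=p_w(\gamma(f,\phi))$, where $w(f,\phi)$ is obtained by substituting $a=f$, $b=\phi$. *)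

theory Defs
  imports "HOL-Analysis.Analysis" "HOL-Computational_Algebra.Polynomial"
begin

text \<open>Elements of PSL(2,C) are represented by lifts in SL(2,C) (complex 2x2 matrices of
determinant 1); all quantities below are invariant under the sign change of lifts.
A representation F_2 = <a,b> -> PSL(2,C) is given by the (lifts of the) images A, B
of the two free generators.\<close>

type_synonym cmat = "complex^2^2"

definition commutator :: "cmat \<Rightarrow> cmat \<Rightarrow> cmat" where
  "commutator x y = x ** y ** matrix_inv x ** matrix_inv y"

definition gamma :: "cmat \<Rightarrow> cmat \<Rightarrow> complex" where
  "gamma x y = trace (commutator x y) - 2"

definition principal_char :: "cmat \<Rightarrow> cmat \<Rightarrow> complex \<times> complex \<times> complex" where
  "principal_char A B = (gamma A B, (trace A)^2 - 4, (trace B)^2 - 4)"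

definition parabolic :: "cmat \<Rightarrow> bool" where
  "parabolic x \<longleftrightarrow> det x = 1 \<and> x \<noteq> mat 1 \<and> x \<noteq> - mat 1 \<and> (trace x)^2 = 4"

definition elliptic_order_two :: "cmat \<Rightarrow> bool" where
  "elliptic_order_two x \<longleftrightarrow> det x = 1 \<and> x \<noteq> mat 1 \<and> x \<noteq> - mat 1 \<and>
     (x ** x = mat 1 \<or> x ** x = - mat 1)"

definition irreducible_rep :: "cmat \<Rightarrow> cmat \<Rightarrow> bool" where
  "irreducible_rep A B \<longleftrightarrow>
     \<not> (\<exists>v::complex^2. v \<noteq> 0 \<and> (\<exists>l m. A *v v = l *s v \<and> B *v v = m *s v))"

inductive_set gen_group :: "cmat set \<Rightarrow> cmat set" for S where
  one: "mat 1 \<in> gen_group S"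
| gen: "s \<in> S \<Longrightarrow> s \<in> gen_group S"
| inv: "s \<in> S \<Longrightarrow> matrix_inv s \<in> gen_group S"
| mult: "g \<in> gen_group S \<Longrightarrow> h \<in> gen_group S \<Longrightarrow> g ** h \<in> gen_group S"

text \<open>The image of the group G (of SL(2,C) matrices) in PSL(2,C) is discrete:
every point [g] = {g,-g} of the image is isolated in the quotient topology.\<close>
definition discrete_PSL :: "cmat set \<Rightarrow> bool" where
  "discrete_PSL G \<longleftrightarrow> (\<forall>g\<in>G. \<exists>e>0. \<forall>h\<in>G.
      (dist h g < e \<or> dist h (- g) < e) \<longrightarrow> h = g \<or> h = - g)"

definition discrete_rep :: "cmat \<Rightarrow> cmat \<Rightarrow> bool" where
  "discrete_rep A B \<longleftrightarrow> discrete_PSL (gen_group {A, B})"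

definition mpow :: "cmat \<Rightarrow> int \<Rightarrow> cmat" where
  "mpow f m = (if 0 \<le> m then ((\<lambda>x. f ** x) ^^ nat m) (mat 1)
               else ((\<lambda>x. matrix_inv f ** x) ^^ nat (- m)) (mat 1))"

text \<open>A word a^{m_1} b a^{m_2} b ... b a^{m_n} is encoded by the list [m_1,...,m_n].\<close>
fun word_eval :: "int list \<Rightarrow> cmat \<Rightarrow> cmat \<Rightarrow> cmat" where
  "word_eval [] f p = mat 1"
| "word_eval [m] f p = mpow f m"
| "word_eval (m # ms) f p = mpow f m ** p ** word_eval ms f p"

definition good_word :: "int list \<Rightarrow> bool" where
  "good_word ms \<longleftrightarrow> length ms \<ge> 3 \<and> (\<forall>i. 1 \<le> i \<and> i < length ms - 1 \<longrightarrow> ms ! i \<noteq> 0)"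

definition word_poly :: "int list \<Rightarrow> int poly" where
  "word_poly ms = (THE p. \<forall>f \<phi>. parabolic f \<and> elliptic_order_two \<phi> \<longrightarrow>
       gamma f (word_eval ms f \<phi>) = poly (map_poly of_int p) (gamma f \<phi>))"

end

theory Submission
  imports Defs
begin

text \<open>Write the parabolic A as \<plusminus>(I + N) with N^2 = 0 and put \<lambda>(X) = tr (N X); then
\<gamma>(A, X) = \<lambda>(X)^2 for every X in SL(2,C). For B elliptic of order two, \<lambda> of the suffixes of
w(A, B) satisfies a three-term recurrence in c = \<lambda>(B), which identifies p_w explicitly and
gives \<gamma>(A, W) = p_w(\<gamma>) for W = w(A, B).

Right multiplication by I + t N commutes with A, preserves \<lambda> and adds t \<lambda>(W) to the trace
of W. So if p_w(\<gamma>) \<noteq> 0, i.e. \<lambda>(W) \<noteq> 0, some \<psi> = W (I + t N) has trace zero: \<psi> is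
elliptic of order two, \<gamma>(A, \<psi>) = p_w(\<gamma>) and \<psi> A \<psi>^-1 = W A W^-1. Conjugation by \<psi>
then preserves H = \<langle>A, W A W^-1, -I\<rangle> \<subseteq> \<langle>A, B\<rangle>, and \<langle>A, \<psi>\<rangle> \<subseteq> H \<union> \<psi> H; a group
containing a discrete group with index at most two is discrete. If p_w(\<gamma>) = 0, the character
(0, 0, -4) is realised by the finite group generated by I and diag(i, -i).\<close>

lemma matrix_mul_uminus_left: "(- A) ** B = - (A ** (B::'a::ring_1^'p^'n))"
  by (simp add: vec_eq_iff matrix_matrix_mult_def sum_negf)

lemma matrix_mul_uminus_right: "A ** (- B) = - (A ** (B::'a::ring_1^'p^'n))"
  by (simp add: vec_eq_iff matrix_matrix_mult_def sum_negf)

lemma matrix_mul_diff_right: "A ** (B - C) = A ** B - A ** (C::'a::ring_1^'p^'n)"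
  by (simp add: vec_eq_iff matrix_matrix_mult_def sum_subtractf algebra_simps)

lemma matrix_inv_eqI:
  fixes X Y :: "'a::field^'n^'n"
  assumes "X ** Y = mat 1"
  shows "matrix_inv X = Y"
proof -
  have YX: "Y ** X = mat 1" using assms matrix_left_right_inverse by blast
  show ?thesis unfolding matrix_inv_def
  proof (rule some_equality)
    fix Z assume Z: "X ** Z = mat 1 \<and> Z ** X = mat 1"
    have "Z = (Y ** X) ** Z" by (simp only: YX matrix_mul_lid)
    also have "\<dots> = Y" using Z by (simp only: matrix_mul_assoc[symmetric] matrix_mul_rid)
    finally show "Z = Y" .
  qed (use assms YX in auto)
qed

lemma matrix_inv_right:
  fixes X :: "'a::field^'n^'n"
  assumes "det X \<noteq> 0"
  shows "X ** matrix_inv X = mat 1"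
proof -
  have "invertible X" using assms by (simp add: invertible_det_nz)
  then show ?thesis unfolding invertible_def matrix_inv_def by (rule someI_ex[THEN conjunct1])
qed

lemma matrix_inv_left:
  fixes X :: "'a::field^'n^'n"
  assumes "det X \<noteq> 0"
  shows "matrix_inv X ** X = mat 1"
  using matrix_inv_right[OF assms] matrix_left_right_inverse by blast

lemma det_matrix_inv:
  fixes X :: "'a::field^'n^'n"
  assumes "det X = 1"
  shows "det (matrix_inv X) = 1"
  using arg_cong[OF matrix_inv_right, of X det] assms by (simp add: det_mul det_I)

lemma matrix_inv_matrix_inv:
  fixes X :: "'a::field^'n^'n"
  assumes "det X \<noteq> 0"
  shows "matrix_inv (matrix_inv X) = X"
  by (rule matrix_inv_eqI[OF matrix_inv_left[OF assms]])

lemma matrix_inv_mult: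
  fixes X Y :: "'a::field^'n^'n"
  assumes "det X \<noteq> 0" "det Y \<noteq> 0"
  shows "matrix_inv (X ** Y) = matrix_inv Y ** matrix_inv X"
proof (rule matrix_inv_eqI)
  have "X ** Y ** (matrix_inv Y ** matrix_inv X) = X ** (Y ** matrix_inv Y) ** matrix_inv X"
    by (simp add: matrix_mul_assoc)
  then show "X ** Y ** (matrix_inv Y ** matrix_inv X) = mat 1"
    using assms by (simp add: matrix_inv_right)
qed

lemma matrix_inv_uminus:
  fixes X :: "'a::field^'n^'n"
  assumes "det X \<noteq> 0"
  shows "matrix_inv (- X) = - matrix_inv X"
  using assms
  by (intro matrix_inv_eqI) (simp add: matrix_mul_uminus_left matrix_mul_uminus_right matrix_inv_right)

definition mat2 :: "complex \<Rightarrow> complex \<Rightarrow> complex \<Rightarrow> complex \<Rightarrow> cmat" where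
  "mat2 a b c d = (\<chi> i j. if i = 1 then (if j = 1 then a else b) else (if j = 1 then c else d))"

lemma mat2_nth [simp]:
  "mat2 a b c d $ 1 $ 1 = a" "mat2 a b c d $ 1 $ 2 = b"
  "mat2 a b c d $ 2 $ 1 = c" "mat2 a b c d $ 2 $ 2 = d"
  by (simp_all add: mat2_def)

lemma cmat_cases:
  fixes X :: cmat
  obtains a b c d where "X = mat2 a b c d"
proof
  show "X = mat2 (X$1$1) (X$1$2) (X$2$1) (X$2$2)" by (simp add: vec_eq_iff forall_2)
qed

lemma mat2_eq_iff: "mat2 a b c d = mat2 a' b' c' d' \<longleftrightarrow> a = a' \<and> b = b' \<and> c = c' \<and> d = d'"
  by (auto simp: vec_eq_iff forall_2)

lemma mat2_mult [simp]: "mat2 a b c d ** mat2 a' b' c' d' =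
   mat2 (a*a' + b*c') (a*b' + b*d') (c*a' + d*c') (c*b' + d*d')"
  by (simp add: vec_eq_iff forall_2 matrix_matrix_mult_def sum_2)

lemma mat_1_eq_mat2: "mat 1 = mat2 1 0 0 1"
  by (simp add: vec_eq_iff forall_2 mat_def)

lemma uminus_mat2 [simp]: "- mat2 a b c d = mat2 (-a) (-b) (-c) (-d)"
  by (simp add: vec_eq_iff forall_2)

lemma det_mat2 [simp]: "det (mat2 a b c d) = a*d - b*c"
  by (simp add: det_2)

lemma trace_mat2 [simp]: "trace (mat2 a b c d) = a + d"
  by (simp add: trace_def sum_2)

lemma matrix_inv_mat2:
  assumes "a*d - b*c = 1"
  shows "matrix_inv (mat2 a b c d) = mat2 d (-b) (-c) a"
  using assms by (intro matrix_inv_eqI) (simp add: mat_1_eq_mat2 mat2_eq_iff algebra_simps)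

lemma mult_self_eq_minus_1:
  fixes X :: cmat
  assumes "trace X = 0" "det X = 1"
  shows "X ** X = - mat 1"
proof -
  obtain a b c d where X: "X = mat2 a b c d" by (rule cmat_cases)
  have "a + d = 0" "a*d - b*c = 1" using assms X by simp_all
  then show ?thesis unfolding X mat_1_eq_mat2 mat2_mult uminus_mat2 mat2_eq_iff by algebra
qed

section \<open>Parabolic elements\<close>

text \<open>With N = [[p, q], [r, -p]], which squares to zero when p^2 + q r = 0,
unipotent p q r t = I + t N and nil_trace p q r X = tr (N X).\<close>

definition unipotent :: "complex \<Rightarrow> complex \<Rightarrow> complex \<Rightarrow> complex \<Rightarrow> cmat" where
  "unipotent p q r t = mat2 (1 + t*p) (t*q) (t*r) (1 - t*p)"

definition nil_trace :: "complex \<Rightarrow> complex \<Rightarrow> complex \<Rightarrow> cmat \<Rightarrow> complex" where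
  "nil_trace p q r X = p * X$1$1 + q * X$2$1 + r * X$1$2 - p * X$2$2"

lemma unipotent_0: "unipotent p q r 0 = mat 1"
  by (simp add: unipotent_def mat_1_eq_mat2)

lemma unipotent_mult_unipotent:
  assumes "p^2 + q*r = 0"
  shows "unipotent p q r s ** unipotent p q r t = unipotent p q r (s + t)"
  unfolding unipotent_def mat2_mult mat2_eq_iff using assms by algebra

lemma det_unipotent:
  assumes "p^2 + q*r = 0"
  shows "det (unipotent p q r t) = 1"
  using assms unfolding unipotent_def by simp algebra

lemma funpow_unipotent:
  assumes "p^2 + q*r = 0"
  shows "((\<lambda>x. unipotent p q r s ** x) ^^ n) (mat 1) = unipotent p q r (of_nat n * s)"
  by (induction n) (simp_all add: unipotent_0 unipotent_mult_unipotent[OF assms] algebra_simps)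

lemma mpow_unipotent:
  assumes "p^2 + q*r = 0"
  shows "mpow (unipotent p q r 1) m = unipotent p q r (of_int m)"
proof -
  have "matrix_inv (unipotent p q r 1) = unipotent p q r (-1)"
    by (rule matrix_inv_eqI) (simp add: unipotent_mult_unipotent[OF assms] unipotent_0)
  then show ?thesis
    by (simp add: mpow_def funpow_unipotent[OF assms])
qed

lemma funpow_uminus_mult:
  fixes g :: "'a::ring_1^'n^'n"
  shows "((\<lambda>x. (- g) ** x) ^^ n) (mat 1) = ((\<lambda>x. g ** x) ^^ n) (mat 1) \<or>
         ((\<lambda>x. (- g) ** x) ^^ n) (mat 1) = - ((\<lambda>x. g ** x) ^^ n) (mat 1)"
  by (induction n) (auto simp: matrix_mul_uminus_left matrix_mul_uminus_right)

lemma mpow_uminus: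
  fixes f :: cmat
  assumes "det f \<noteq> 0"
  shows "mpow (- f) m = mpow f m \<or> mpow (- f) m = - mpow f m"
  using funpow_uminus_mult[where g = f and n = "nat m"]
    funpow_uminus_mult[where g = "matrix_inv f" and n = "nat (- m)"]
  by (simp add: mpow_def matrix_inv_uminus[OF assms])

lemma parabolic_normal_form:
  assumes "det f = 1" "(trace f)^2 = 4"
  obtains p q r where "p^2 + q*r = 0" "f = unipotent p q r 1 \<or> f = - unipotent p q r 1"
proof -
  obtain a b c d where f: "f = mat2 a b c d" by (rule cmat_cases)
  define \<epsilon> where "\<epsilon> = (a + d) / 2"
  have \<epsilon>2: "\<epsilon>^2 = 1" using assms unfolding f \<epsilon>_def by (simp add: power_divide)
  have ad: "a + d = 2*\<epsilon>" by (simp add: \<epsilon>_def)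
  have bc: "b*c = a*d - 1" using assms(1) unfolding f by simp algebra
  have "(\<epsilon>*a - 1)^2 + (\<epsilon>*b)*(\<epsilon>*c) = 0" using \<epsilon>2 ad bc by algebra
  moreover have "f = mat2 (\<epsilon>*(1 + (\<epsilon>*a - 1))) (\<epsilon>*(\<epsilon>*b)) (\<epsilon>*(\<epsilon>*c)) (\<epsilon>*(1 - (\<epsilon>*a - 1)))"
    unfolding f mat2_eq_iff using \<epsilon>2 ad by algebra
  then have "f = unipotent (\<epsilon>*a - 1) (\<epsilon>*b) (\<epsilon>*c) 1 \<or> f = - unipotent (\<epsilon>*a - 1) (\<epsilon>*b) (\<epsilon>*c) 1"
    using \<epsilon>2 by (auto simp: unipotent_def power2_eq_1_iff mat2_eq_iff)
  ultimately show ?thesis by (rule that)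
qed

lemma nil_trace_mat2 [simp]: "nil_trace p q r (mat2 a b c d) = p*a + q*c + r*b - p*d"
  by (simp add: nil_trace_def)

lemma nil_trace_uminus [simp]: "nil_trace p q r (- X) = - nil_trace p q r X"
  by (simp add: nil_trace_def)

lemma nil_trace_unipotent_mult:
  assumes "p^2 + q*r = 0"
  shows "nil_trace p q r (unipotent p q r t ** X) = nil_trace p q r X"
proof -
  obtain a b c d where X: "X = mat2 a b c d" by (rule cmat_cases)
  have "nil_trace p q r (unipotent p q r t ** X) = nil_trace p q r X + t*(p^2 + q*r)*trace X"
    unfolding X unipotent_def by (simp add: power2_eq_square) algebra
  then show ?thesis using assms by simp
qed

lemma nil_trace_mult_unipotent_mult:
  assumes "p^2 + q*r = 0"
  shows "nil_trace p q r (Y ** (unipotent p q r t ** X)) =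
         nil_trace p q r (Y ** X) + t * nil_trace p q r Y * nil_trace p q r X"
proof -
  obtain a b c d where X: "X = mat2 a b c d" by (rule cmat_cases)
  obtain a' b' c' d' where Y: "Y = mat2 a' b' c' d'" by (rule cmat_cases)
  have "nil_trace p q r (Y ** (unipotent p q r t ** X)) =
        nil_trace p q r (Y ** X) + t * nil_trace p q r Y * nil_trace p q r X
          + t*(p^2 + q*r)*(trace Y * trace X - trace (Y ** X))"
    unfolding X Y unipotent_def by (simp add: power2_eq_square) algebra
  then show ?thesis using assms by simp
qed

lemma nil_trace_unipotent:
  assumes "p^2 + q*r = 0"
  shows "nil_trace p q r (unipotent p q r t) = 0"
    and "nil_trace p q r (Y ** unipotent p q r t) = nil_trace p q r Y"
proof -
  have "nil_trace p q r (mat 1) = 0" by (simp add: mat_1_eq_mat2)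
  then show "nil_trace p q r (unipotent p q r t) = 0"
    and "nil_trace p q r (Y ** unipotent p q r t) = nil_trace p q r Y"
    using nil_trace_unipotent_mult[OF assms, of t "mat 1"]
      nil_trace_mult_unipotent_mult[OF assms, of Y t "mat 1"]
    by simp_all
qed

lemma trace_mult_unipotent: "trace (W ** unipotent p q r t) = trace W + t * nil_trace p q r W"
  by (cases W rule: cmat_cases) (simp add: unipotent_def algebra_simps)

lemma gamma_unipotent:
  assumes "p^2 + q*r = 0" and "det g = 1"
  shows "gamma (unipotent p q r 1) g = (nil_trace p q r g)^2"
proof -
  obtain a b c d where g: "g = mat2 a b c d" by (rule cmat_cases)
  have dg: "a*d - b*c = 1" using assms(2) g by simp
  have du: "(1 + 1*p) * (1 - 1*p) - (1*q) * (1*r) = 1" using assms(1) by algebra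
  show ?thesis
    unfolding gamma_def commutator_def g unipotent_def matrix_inv_mat2[OF du] matrix_inv_mat2[OF dg]
    using assms(1) dg by simp algebra
qed

lemma gamma_uminus_left:
  assumes "det f \<noteq> 0"
  shows "gamma (- f) g = gamma f g"
  using assms
  by (simp add: gamma_def commutator_def matrix_inv_uminus matrix_mul_uminus_left
      matrix_mul_uminus_right)

lemma gamma_parabolic:
  assumes "p^2 + q*r = 0" and "f = unipotent p q r 1 \<or> f = - unipotent p q r 1" and "det g = 1"
  shows "gamma f g = (nil_trace p q r g)^2"
proof -
  have "det (unipotent p q r 1) \<noteq> 0" using det_unipotent[OF assms(1)] by simp
  then show ?thesis using assms(2) gamma_unipotent[OF assms(1,3)] gamma_uminus_left by auto
qed

lemma mpow_parabolic:
  assumes "p^2 + q*r = 0" and "f = unipotent p q r 1 \<or> f = - unipotent p q r 1"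
  shows "mpow f m = unipotent p q r (of_int m) \<or> mpow f m = - unipotent p q r (of_int m)"
proof -
  have "det (unipotent p q r 1) \<noteq> 0" using det_unipotent[OF assms(1)] by simp
  then show ?thesis using assms(2) mpow_unipotent[OF assms(1)] mpow_uminus by metis
qed

lemma det_mpow:
  assumes "det f = 1"
  shows "det (mpow f m) = 1"
proof -
  have "det (((\<lambda>x. g ** x) ^^ n) (mat 1)) = 1" if "det g = 1" for g :: cmat and n
    using that by (induction n) (simp_all add: det_mul det_I)
  then show ?thesis using assms det_matrix_inv[OF assms] by (simp add: mpow_def)
qed

lemma det_word_eval:
  assumes "det f = 1" "det \<phi> = 1"
  shows "det (word_eval ms f \<phi>) = 1"
  using assms by (induction ms f \<phi> rule: word_eval.induct) (simp_all add: det_mul det_mpow det_I)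

lemma nil_trace_word_eval_Cons:
  assumes pqr: "p^2 + q*r = 0" and f: "f = unipotent p q r 1 \<or> f = - unipotent p q r 1"
    and "trace \<phi> = 0" "det \<phi> = 1" and "ms \<noteq> []"
  obtains \<tau> :: complex where "\<tau>^2 = 1"
    "nil_trace p q r (word_eval (m # ms) f \<phi>) = \<tau> * nil_trace p q r (\<phi> ** word_eval ms f \<phi>)"
    "nil_trace p q r (\<phi> ** word_eval (m # ms) f \<phi>) =
       \<tau> * (of_int m * nil_trace p q r \<phi> * nil_trace p q r (\<phi> ** word_eval ms f \<phi>)
             - nil_trace p q r (word_eval ms f \<phi>))"
proof -
  define W where "W = word_eval ms f \<phi>"
  define U where "U = unipotent p q r (of_int m)"
  have word: "word_eval (m # ms) f \<phi> = mpow f m ** (\<phi> ** W)"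
    using \<open>ms \<noteq> []\<close> by (cases ms) (simp_all add: W_def matrix_mul_assoc)
  have "\<phi> ** (\<phi> ** W) = - W"
    using mult_self_eq_minus_1[OF assms(3,4)] by (simp add: matrix_mul_assoc matrix_mul_uminus_left)
  then have UW: "nil_trace p q r (\<phi> ** (U ** (\<phi> ** W))) =
      of_int m * nil_trace p q r \<phi> * nil_trace p q r (\<phi> ** W) - nil_trace p q r W"
    by (simp add: U_def nil_trace_mult_unipotent_mult[OF pqr])
  have W: "nil_trace p q r (U ** (\<phi> ** W)) = nil_trace p q r (\<phi> ** W)"
    unfolding U_def by (rule nil_trace_unipotent_mult[OF pqr])
  from mpow_parabolic[OF pqr f, of m] show ?thesis
  proof (elim disjE)
    assume "mpow f m = unipotent p q r (of_int m)"
    then show ?thesis using that[of 1] UW W by (simp add: word W_def[symmetric] U_def)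
  next
    assume "mpow f m = - unipotent p q r (of_int m)"
    then show ?thesis using that[of "-1"] UW W
      by (simp add: word W_def[symmetric] U_def matrix_mul_uminus_left matrix_mul_uminus_right)
  qed
qed

section \<open>The word polynomial\<close>

lemma map_poly_of_int_add [simp]:
  "map_poly (of_int :: int \<Rightarrow> 'a::comm_ring_1) (p + q) = map_poly of_int p + map_poly of_int q"
  by (rule poly_eqI) (simp add: coeff_map_poly)

lemma map_poly_of_int_uminus [simp]:
  "map_poly (of_int :: int \<Rightarrow> 'a::comm_ring_1) (- p) = - map_poly of_int p"
  by (rule poly_eqI) (simp add: coeff_map_poly)

lemma map_poly_of_int_diff [simp]:
  "map_poly (of_int :: int \<Rightarrow> 'a::comm_ring_1) (p - q) = map_poly of_int p - map_poly of_int q"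
  by (rule poly_eqI) (simp add: coeff_map_poly)

lemma map_poly_of_int_smult [simp]:
  "map_poly (of_int :: int \<Rightarrow> 'a::comm_ring_1) (smult a p) = smult (of_int a) (map_poly of_int p)"
  by (rule poly_eqI) (simp add: coeff_map_poly)

lemma map_poly_of_int_pCons [simp]:
  "map_poly (of_int :: int \<Rightarrow> 'a::comm_ring_1) (pCons a p) = pCons (of_int a) (map_poly of_int p)"
  by (rule map_poly_pCons) simp

lemma map_poly_of_int_mult [simp]:
  "map_poly (of_int :: int \<Rightarrow> 'a::comm_ring_1) (p * q) = map_poly of_int p * map_poly of_int q"
  by (induction p) (simp_all add: algebra_simps)

lemma map_poly_of_int_power [simp]:
  "map_poly (of_int :: int \<Rightarrow> 'a::comm_ring_1) (p ^ n) = map_poly of_int p ^ n"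
  by (induction n) simp_all

lemma map_poly_of_int_inj:
  "map_poly (of_int :: int \<Rightarrow> 'a::ring_char_0) p = map_poly of_int q \<Longrightarrow> p = q"
  by (metis (no_types, lifting) coeff_map_poly of_int_0 of_int_eq_iff poly_eqI)

text \<open>Write \<lambda> = nil_trace and c = \<lambda>(b). For w = a^m b w' one has \<lambda>(w) = \<plusminus>\<lambda>(b w') and
\<lambda>(b w) = \<plusminus>(m c \<lambda>(b w') - \<lambda>(w')). Hence \<lambda>(w) and \<lambda>(b w) are, up to sign, polynomials in c^2
times 1 or c: word_polys ms = (P, Q, s) records these polynomials, and s says that the
factor c sits on \<lambda>(w).\<close>

fun word_polys :: "int list \<Rightarrow> int poly \<times> int poly \<times> bool" where
  "word_polys [] = (0, 0, False)"
| "word_polys [m] = (0, 1, False)"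
| "word_polys (m # ms) = (case word_polys ms of (P, Q, s) \<Rightarrow>
      if s then (Q, - P + [:m:] * Q, False) else (Q, - P + [:0, m:] * Q, True))"

definition word_poly_explicit :: "int list \<Rightarrow> int poly" where
  "word_poly_explicit ms = (case word_polys ms of (P, Q, s) \<Rightarrow> if s then [:0, 1:] * P^2 else P^2)"

lemma nil_trace_word_eval:
  assumes pqr: "p^2 + q*r = 0" and f: "f = unipotent p q r 1 \<or> f = - unipotent p q r 1"
    and \<phi>: "trace \<phi> = 0" "det \<phi> = 1" and "ms \<noteq> []"
    and c: "c = nil_trace p q r \<phi>"
    and polys: "word_polys ms = (P, Q, s)"
  shows "\<exists>\<sigma>::complex. \<sigma>^2 = 1 \<and>
     nil_trace p q r (word_eval ms f \<phi>) =
       \<sigma> * (if s then c else 1) * poly (map_poly of_int P) (c^2) \<and>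
     nil_trace p q r (\<phi> ** word_eval ms f \<phi>) =
       \<sigma> * (if s then 1 else c) * poly (map_poly of_int Q) (c^2)"
  using \<open>ms \<noteq> []\<close> polys
proof (induction ms arbitrary: P Q s rule: word_polys.induct)
  case (2 m)
  from mpow_parabolic[OF pqr f, of m] show ?case
    using 2 c
    by (auto simp: nil_trace_unipotent[OF pqr] matrix_mul_uminus_right
        intro: exI[of _ 1] exI[of _ "-1"])
next
  case (3 m m' ms)
  obtain P' Q' s' where polys': "word_polys (m' # ms) = (P', Q', s')"
    by (cases "word_polys (m' # ms)")
  obtain \<sigma> where \<sigma>: "\<sigma>^2 = 1"
    "nil_trace p q r (word_eval (m' # ms) f \<phi>) =
       \<sigma> * (if s' then c else 1) * poly (map_poly of_int P') (c^2)"
    "nil_trace p q r (\<phi> ** word_eval (m' # ms) f \<phi>) =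
       \<sigma> * (if s' then 1 else c) * poly (map_poly of_int Q') (c^2)"
    using "3.IH" polys' by blast
  obtain \<tau> :: complex where \<tau>: "\<tau>^2 = 1"
    "nil_trace p q r (word_eval (m # m' # ms) f \<phi>) =
       \<tau> * nil_trace p q r (\<phi> ** word_eval (m' # ms) f \<phi>)"
    "nil_trace p q r (\<phi> ** word_eval (m # m' # ms) f \<phi>) =
       \<tau> * (of_int m * c * nil_trace p q r (\<phi> ** word_eval (m' # ms) f \<phi>)
             - nil_trace p q r (word_eval (m' # ms) f \<phi>))"
    using nil_trace_word_eval_Cons[OF pqr f \<phi>, of "m' # ms" m] c by auto
  have \<tau>\<sigma>: "(\<tau> * \<sigma>)^2 = 1" using \<tau>(1) \<sigma>(1) by (simp add: power_mult_distrib)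
  have step: "(P, Q, s) =
      (if s' then (Q', - P' + [:m:] * Q', False) else (Q', - P' + [:0, m:] * Q', True))"
    using "3.prems"(2) polys' by simp
  show ?case
  proof (cases s')
    case True
    with step have PQs: "P = Q'" "Q = - P' + [:m:] * Q'" "s = False" by auto
    show ?thesis unfolding PQs using True \<sigma>(2,3) \<tau>(2,3) \<tau>\<sigma>
      by (intro exI[of _ "\<tau> * \<sigma>"]) (simp add: algebra_simps)
  next
    case False
    with step have PQs: "P = Q'" "Q = - P' + [:0, m:] * Q'" "s = True" by auto
    show ?thesis unfolding PQs using False \<sigma>(2,3) \<tau>(2,3) \<tau>\<sigma>
      by (intro exI[of _ "\<tau> * \<sigma>"]) (simp add: algebra_simps power2_eq_square)
  qed
qed simp

lemma gamma_word_eval: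
  assumes "det f = 1" "(trace f)^2 = 4" "det \<phi> = 1" "trace \<phi> = 0" "ms \<noteq> []"
  shows "gamma f (word_eval ms f \<phi>) = poly (map_poly of_int (word_poly_explicit ms)) (gamma f \<phi>)"
proof -
  obtain p q r where pqr: "p^2 + q*r = 0" and f: "f = unipotent p q r 1 \<or> f = - unipotent p q r 1"
    using parabolic_normal_form[OF assms(1,2)] by blast
  define c where "c = nil_trace p q r \<phi>"
  obtain P Q s where polys: "word_polys ms = (P, Q, s)" by (cases "word_polys ms")
  obtain \<sigma> :: complex where "\<sigma>^2 = 1"
    "nil_trace p q r (word_eval ms f \<phi>) = \<sigma> * (if s then c else 1) * poly (map_poly of_int P) (c^2)"
    using nil_trace_word_eval[OF pqr f assms(4,3,5) c_def polys] by blast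
  then have "(nil_trace p q r (word_eval ms f \<phi>))^2 =
      (if s then c^2 else 1) * (poly (map_poly of_int P) (c^2))^2"
    by (cases s) (simp_all add: power_mult_distrib)
  moreover have "gamma f \<phi> = c^2"
    unfolding c_def by (rule gamma_parabolic[OF pqr f assms(3)])
  ultimately show ?thesis
    using gamma_parabolic[OF pqr f det_word_eval[OF assms(1,3)]] polys
    by (simp add: word_poly_explicit_def)
qed

lemma elliptic_order_two_trace:
  assumes "elliptic_order_two \<phi>"
  shows "trace \<phi> = 0"
proof -
  obtain a b c d where \<phi>: "\<phi> = mat2 a b c d" by (rule cmat_cases)
  have det: "a*d - b*c = 1" and ne: "\<phi> \<noteq> mat 1" "\<phi> \<noteq> - mat 1"
    using assms \<phi> by (auto simp: elliptic_order_two_def)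
  consider "\<phi> ** \<phi> = mat 1" | "\<phi> ** \<phi> = - mat 1"
    using assms by (auto simp: elliptic_order_two_def)
  then show ?thesis
  proof cases
    case 1
    then have sq: "a*a + b*c = 1" "b*(a + d) = 0" "c*(a + d) = 0" "c*b + d*d = 1"
      unfolding \<phi> mat_1_eq_mat2 mat2_mult mat2_eq_iff by (auto simp: algebra_simps)
    show ?thesis
    proof (rule ccontr)
      assume "trace \<phi> \<noteq> 0"
      then have "a + d \<noteq> 0" by (simp add: \<phi>)
      then have "b = 0" "c = 0" using sq by auto
      then have "a*a = 1" "a*d = 1" using sq det by simp_all
      then have "d = a" "a = 1 \<or> a = -1"
        using power2_eq_1_iff[of a] by (algebra, simp add: power2_eq_square)
      then show False using ne \<open>b = 0\<close> \<open>c = 0\<close> by (auto simp: \<phi> mat_1_eq_mat2)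
    qed
  next
    case 2
    then have "a*a + b*c = -1" "c*b + d*d = -1"
      unfolding \<phi> mat_1_eq_mat2 mat2_mult uminus_mat2 mat2_eq_iff by auto
    then have "(a + d)^2 = 0" using det by algebra
    then show ?thesis by (simp add: \<phi>)
  qed
qed

lemma exists_parabolic_elliptic_gamma:
  obtains f \<phi> where "parabolic f" "elliptic_order_two \<phi>" "gamma f \<phi> = z"
proof
  define c where "c = csqrt z"
  show "parabolic (unipotent 0 1 0 1)"
    by (simp add: parabolic_def unipotent_def mat_1_eq_mat2 mat2_eq_iff)
  show "elliptic_order_two (mat2 \<i> 0 c (-\<i>))"
    by (simp add: elliptic_order_two_def mat_1_eq_mat2 mat2_eq_iff)
  have "gamma (unipotent 0 1 0 1) (mat2 \<i> 0 c (-\<i>)) = c^2"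
    by (subst gamma_unipotent) simp_all
  then show "gamma (unipotent 0 1 0 1) (mat2 \<i> 0 c (-\<i>)) = z"
    by (simp add: c_def)
qed

lemma word_poly_eq_explicit:
  assumes "ms \<noteq> []"
  shows "word_poly ms = word_poly_explicit ms"
  unfolding word_poly_def
proof (rule the_equality)
  show "\<forall>f \<phi>. parabolic f \<and> elliptic_order_two \<phi> \<longrightarrow>
      gamma f (word_eval ms f \<phi>) = poly (map_poly of_int (word_poly_explicit ms)) (gamma f \<phi>)"
    using gamma_word_eval assms elliptic_order_two_trace
    by (auto simp: parabolic_def elliptic_order_two_def)
next
  fix P assume P: "\<forall>f \<phi>. parabolic f \<and> elliptic_order_two \<phi> \<longrightarrow>
      gamma f (word_eval ms f \<phi>) = poly (map_poly of_int P) (gamma f \<phi>)"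
  have "poly (map_poly of_int P) z = poly (map_poly of_int (word_poly_explicit ms)) (z::complex)"
    for z
  proof -
    obtain f \<phi> where "parabolic f" "elliptic_order_two \<phi>" "gamma f \<phi> = z"
      by (rule exists_parabolic_elliptic_gamma)
    then show ?thesis
      using P gamma_word_eval[OF _ _ _ _ assms] elliptic_order_two_trace
      by (auto simp: parabolic_def elliptic_order_two_def)
  qed
  then have "map_poly (of_int :: int \<Rightarrow> complex) P = map_poly of_int (word_poly_explicit ms)"
    using poly_eq_poly_eq_iff by blast
  then show "P = word_poly_explicit ms" by (rule map_poly_of_int_inj)
qed

lemma gamma_word_eval_word_poly:
  assumes "det f = 1" "(trace f)^2 = 4" "det \<phi> = 1" "trace \<phi> = 0" "ms \<noteq> []"
  shows "gamma f (word_eval ms f \<phi>) = poly (map_poly of_int (word_poly ms)) (gamma f \<phi>)"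
  using gamma_word_eval[OF assms] word_poly_eq_explicit[OF assms(5)] by simp

lemma gen_group_det:
  assumes "\<forall>s\<in>S. det s = 1" and "g \<in> gen_group S"
  shows "det g = 1"
  using assms(2) by induction (simp_all add: assms(1) det_I det_mul det_matrix_inv)

lemma gen_group_matrix_inv:
  assumes "\<forall>s\<in>S. det s = 1" and "g \<in> gen_group S"
  shows "matrix_inv g \<in> gen_group S"
  using assms(2)
proof induction
  case one
  have "matrix_inv (mat 1 :: cmat) = mat 1" by (rule matrix_inv_eqI) simp
  then show ?case by (simp add: gen_group.one)
next
  case (gen s)
  then show ?case by (rule gen_group.inv)
next
  case (inv s)
  then show ?case using assms(1) by (simp add: matrix_inv_matrix_inv gen_group.gen)
next
  case (mult g h)
  then show ?case using gen_group_det[OF assms(1)] by (simp add: matrix_inv_mult gen_group.mult)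
qed

lemma gen_group_subset:
  assumes "\<forall>t\<in>T. det t = 1" and "S \<subseteq> gen_group T"
  shows "gen_group S \<subseteq> gen_group T"
proof
  fix g assume "g \<in> gen_group S"
  then show "g \<in> gen_group T"
    by induction (use assms gen_group_matrix_inv in \<open>auto intro: gen_group.intros\<close>)
qed

lemma mpow_in_gen_group:
  assumes "f \<in> gen_group S" and "matrix_inv f \<in> gen_group S"
  shows "mpow f m \<in> gen_group S"
proof -
  have "((\<lambda>x. g ** x) ^^ n) (mat 1) \<in> gen_group S" if "g \<in> gen_group S" for g n
    using that by (induction n) (simp_all add: gen_group.one gen_group.mult)
  then show ?thesis using assms by (simp add: mpow_def)
qed

lemma word_eval_in_gen_group:
  assumes "f \<in> gen_group S" and "matrix_inv f \<in> gen_group S" and "\<phi> \<in> gen_group S"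
  shows "word_eval ms f \<phi> \<in> gen_group S"
  using assms
  by (induction ms f \<phi> rule: word_eval.induct)
    (simp_all add: gen_group.one gen_group.mult mpow_in_gen_group)

lemma uminus_in_gen_group:
  assumes "- mat 1 \<in> gen_group S" and "g \<in> gen_group S"
  shows "- g \<in> gen_group S"
  using gen_group.mult[OF assms] by (simp add: matrix_mul_uminus_left)

lemma gen_group_conj_involution:
  assumes dets: "\<forall>s\<in>S. det s = 1" and sq: "\<psi> ** \<psi> = - mat 1"
    and neg: "- mat 1 \<in> gen_group S" and gens: "\<forall>s\<in>S. \<psi> ** s ** \<psi> \<in> gen_group S"
    and "h \<in> gen_group S"
  shows "\<psi> ** h ** \<psi> \<in> gen_group S"
proof -
  have sq': "X ** \<psi> ** \<psi> = - X" for X :: cmat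
    by (simp add: matrix_mul_assoc[symmetric] sq matrix_mul_uminus_right)
  from \<open>h \<in> gen_group S\<close> show ?thesis
  proof induction
    case one
    then show ?case using sq neg by simp
  next
    case (gen s)
    then show ?case using gens by blast
  next
    case (inv s)
    have "\<psi> ** s ** \<psi> ** (\<psi> ** matrix_inv s ** \<psi>) = - (\<psi> ** (s ** matrix_inv s) ** \<psi>)"
      by (simp add: matrix_mul_assoc sq' matrix_mul_uminus_left)
    also have "\<dots> = mat 1"
      using inv dets sq by (simp add: matrix_inv_right)
    finally have "matrix_inv (\<psi> ** s ** \<psi>) = \<psi> ** matrix_inv s ** \<psi>"
      by (rule matrix_inv_eqI)
    then show ?case using gen_group_matrix_inv[OF dets] gens inv by metis
  next
    case (mult g h)
    have "\<psi> ** (g ** h) ** \<psi> = - ((\<psi> ** g ** \<psi>) ** (\<psi> ** h ** \<psi>))"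
      by (simp add: matrix_mul_assoc sq' matrix_mul_uminus_left)
    then show ?case using mult neg by (metis gen_group.mult uminus_in_gen_group)
  qed
qed

lemma gen_group_involution_cosets:
  assumes dets: "\<forall>s\<in>S. det s = 1" and sq: "\<psi> ** \<psi> = - mat 1"
    and neg: "- mat 1 \<in> gen_group S" and A: "A \<in> gen_group S"
    and conj: "\<And>h. h \<in> gen_group S \<Longrightarrow> \<psi> ** h ** \<psi> \<in> gen_group S"
  shows "gen_group {A, \<psi>} \<subseteq> gen_group S \<union> (\<lambda>h. \<psi> ** h) ` gen_group S"
proof
  fix g assume "g \<in> gen_group {A, \<psi>}"
  then show "g \<in> gen_group S \<union> (\<lambda>h. \<psi> ** h) ` gen_group S"
  proof induction
    case one
    then show ?case by (simp add: gen_group.one)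
  next
    case (gen s)
    then show ?case using A gen_group.one[of S] by (auto intro: image_eqI[of \<psi> _ "mat 1"])
  next
    case (inv s)
    have "matrix_inv \<psi> = \<psi> ** (- mat 1)"
      by (rule matrix_inv_eqI) (simp add: matrix_mul_uminus_right matrix_mul_assoc sq)
    then show ?case
      using inv A neg gen_group_matrix_inv[OF dets A] by auto
  next
    case (mult g h)
    have closed: "g ** h \<in> gen_group S" if "g \<in> gen_group S" "h \<in> gen_group S" for g h
      using that by (rule gen_group.mult)
    from mult.IH show ?case
    proof (elim UnE imageE)
      fix h1 h2 assume "g = \<psi> ** h1" "h = \<psi> ** h2" and h12: "h1 \<in> gen_group S" "h2 \<in> gen_group S"
      then have "g ** h = (\<psi> ** h1 ** \<psi>) ** h2" by (simp add: matrix_mul_assoc)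
      then show ?thesis using closed conj h12 by simp
    next
      fix h1 assume "g = \<psi> ** h1" and h1: "h1 \<in> gen_group S" and h: "h \<in> gen_group S"
      then have "g ** h = \<psi> ** (h1 ** h)" by (simp add: matrix_mul_assoc)
      then show ?thesis using closed h1 h by blast
    next
      fix h2 assume g: "g \<in> gen_group S" and "h = \<psi> ** h2" and h2: "h2 \<in> gen_group S"
      then have "g ** h = \<psi> ** ((\<psi> ** g ** \<psi>) ** (- h2))"
        by (simp add: matrix_mul_assoc sq matrix_mul_uminus_left matrix_mul_uminus_right)
      then show ?thesis using closed conj uminus_in_gen_group[OF neg] g h2 by blast
    next
      assume "g \<in> gen_group S" "h \<in> gen_group S"
      then show ?thesis using closed by blast
    qed
  qed
qed

section \<open>Discreteness in PSL(2,C)\<close>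

lemma discrete_PSL_subset: "H \<subseteq> G \<Longrightarrow> discrete_PSL G \<Longrightarrow> discrete_PSL H"
  unfolding discrete_PSL_def by (meson subsetD)

lemma discrete_PSL_if_locally_finite:
  assumes "\<And>z. \<exists>e>0. finite {x\<in>G. dist x z < e}"
  shows "discrete_PSL G"
  unfolding discrete_PSL_def
proof
  fix g assume "g \<in> G"
  obtain e1 e2 where "e1 > 0" "finite {x\<in>G. dist x g < e1}"
    and "e2 > 0" "finite {x\<in>G. dist x (-g) < e2}"
    using assms by meson
  define e where "e = min e1 e2"
  define T where "T = {x\<in>G. dist x g < e \<or> dist x (-g) < e}"
  have "T \<subseteq> {x\<in>G. dist x g < e1} \<union> {x\<in>G. dist x (-g) < e2}"
    by (auto simp: T_def e_def)
  then have "finite T" using \<open>finite {x\<in>G. dist x g < e1}\<close> \<open>finite {x\<in>G. dist x (-g) < e2}\<close>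
    by (meson finite_Un finite_subset)
  obtain d1 where d1: "d1 > 0" "\<forall>x\<in>T. x \<noteq> g \<longrightarrow> d1 \<le> dist g x"
    using finite_set_avoid[OF \<open>finite T\<close>] by blast
  obtain d2 where d2: "d2 > 0" "\<forall>x\<in>T. x \<noteq> -g \<longrightarrow> d2 \<le> dist (-g) x"
    using finite_set_avoid[OF \<open>finite T\<close>] by blast
  show "\<exists>e>0. \<forall>h\<in>G. dist h g < e \<or> dist h (- g) < e \<longrightarrow> h = g \<or> h = - g"
  proof (intro exI[of _ "min e (min d1 d2)"] conjI ballI impI)
    show "0 < min e (min d1 d2)" using \<open>e1 > 0\<close> \<open>e2 > 0\<close> d1 d2 by (simp add: e_def)
  next
    fix h assume "h \<in> G" and near: "dist h g < min e (min d1 d2) \<or> dist h (- g) < min e (min d1 d2)"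
    then have "h \<in> T" by (auto simp: T_def)
    with near d1(2) d2(2) show "h = g \<or> h = - g" by (force simp: dist_commute)
  qed
qed

lemma discrete_PSL_finite: "finite G \<Longrightarrow> discrete_PSL G"
  by (rule discrete_PSL_if_locally_finite) (auto intro: exI[of _ 1])

lemma norm_le_sum_entries:
  "norm (M::cmat) \<le> norm (M$1$1) + norm (M$1$2) + norm (M$2$1) + norm (M$2$2)"
proof -
  have "norm x \<le> norm (x$1) + norm (x$2)" for x :: "'a::real_normed_vector^2"
  proof -
    have "norm x \<le> (\<Sum>i\<in>UNIV. norm (x$i))" unfolding norm_vec_def by (rule L2_set_le_sum) simp
    then show ?thesis by (simp add: sum_2)
  qed
  from this[of M] this[of "M$1"] this[of "M$2"] show ?thesis by linarith
qed

lemma norm_entry_le: "norm ((M::cmat)$i$j) \<le> norm M"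
  using Finite_Cartesian_Product.norm_nth_le[of "M$i" j]
    Finite_Cartesian_Product.norm_nth_le[of M i]
  by linarith

lemma norm_matrix_mult_le: "norm ((X::cmat) ** (Y::cmat)) \<le> 8 * norm X * norm Y"
proof -
  have entry: "norm ((X ** Y)$i$j) \<le> 2 * (norm X * norm Y)" for i j
  proof -
    have "norm ((X ** Y)$i$j) = norm (X$i$1 * Y$1$j + X$i$2 * Y$2$j)"
      by (simp add: matrix_matrix_mult_def sum_2)
    also have "\<dots> \<le> norm (X$i$1) * norm (Y$1$j) + norm (X$i$2) * norm (Y$2$j)"
      by (rule order_trans[OF norm_triangle_ineq]) (simp add: norm_mult)
    also have "\<dots> \<le> norm X * norm Y + norm X * norm Y"
      using norm_entry_le[of X i] norm_entry_le[of Y _ j] by (intro add_mono mult_mono) auto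
    finally show ?thesis by simp
  qed
  show ?thesis
    using norm_le_sum_entries[of "X ** Y"] entry[of 1 1] entry[of 1 2] entry[of 2 1] entry[of 2 2]
    by linarith
qed

lemma norm_matrix_inv_le:
  assumes "det (X::cmat) = 1"
  shows "norm (matrix_inv X) \<le> 4 * norm X"
proof -
  obtain a b c d where X: "X = mat2 a b c d" by (rule cmat_cases)
  have "matrix_inv X = mat2 d (-b) (-c) a"
    using assms unfolding X by (simp add: matrix_inv_mat2)
  then have "norm (matrix_inv X) \<le> norm (X$2$2) + norm (X$1$2) + norm (X$2$1) + norm (X$1$1)"
    using norm_le_sum_entries[of "matrix_inv X"] by (simp add: X)
  then show ?thesis
    using norm_entry_le[of X 1 1] norm_entry_le[of X 1 2]
      norm_entry_le[of X 2 1] norm_entry_le[of X 2 2]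
    by linarith
qed

lemma dist_matrix_inv_mult_le:
  assumes "det (u::cmat) = 1"
  shows "dist (matrix_inv u ** v) (mat 1) \<le> 32 * norm u * dist v u"
proof -
  have "matrix_inv u ** v - mat 1 = matrix_inv u ** (v - u)"
    using assms by (simp add: matrix_mul_diff_right matrix_inv_left)
  then have "dist (matrix_inv u ** v) (mat 1) \<le> 8 * norm (matrix_inv u) * norm (v - u)"
    using norm_matrix_mult_le by (simp add: dist_norm)
  also have "\<dots> \<le> 8 * (4 * norm u) * norm (v - u)"
    using norm_matrix_inv_le[OF assms] by (simp add: mult_right_mono)
  finally show ?thesis by (simp add: dist_norm)
qed

lemma near_coset_unique_up_to_sign:
  assumes disc: "discrete_PSL (gen_group S)" and dets: "\<forall>s\<in>S. det s = 1" and y: "det y = 1"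
  shows "\<exists>e>0. \<forall>h\<in>gen_group S. \<forall>h'\<in>gen_group S.
           dist (y ** h) z < e \<longrightarrow> dist (y ** h') z < e \<longrightarrow> h' = h \<or> h' = - h"
proof -
  obtain e0 where "e0 > 0" and e0: "\<forall>h\<in>gen_group S. dist h (mat 1) < e0 \<longrightarrow> h = mat 1 \<or> h = - mat 1"
    using disc gen_group.one unfolding discrete_PSL_def by blast
  define e where "e = min 1 (e0 / (64 * (norm z + 1)))"
  have "norm z + 1 > 0" by (simp add: add_nonneg_pos)
  then have "e > 0" using \<open>e0 > 0\<close> by (simp add: e_def)
  have "e \<le> e0 / (64 * (norm z + 1))" by (simp add: e_def)
  then have "64 * (norm z + 1) * e \<le> e0"
    using \<open>norm z + 1 > 0\<close> by (simp add: pos_le_divide_eq mult.commute)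
  have "h' = h \<or> h' = - h"
    if h: "h \<in> gen_group S" and h': "h' \<in> gen_group S"
      and near: "dist (y ** h) z < e" "dist (y ** h') z < e" for h h'
  proof -
    have "det h = 1" using gen_group_det[OF dets h] .
    have "matrix_inv (y ** h) ** (y ** h') = matrix_inv h ** (matrix_inv y ** y) ** h'"
      using y \<open>det h = 1\<close> by (simp add: matrix_inv_mult matrix_mul_assoc)
    then have k: "matrix_inv (y ** h) ** (y ** h') = matrix_inv h ** h'"
      using y by (simp add: matrix_inv_left)
    have "norm (y ** h) \<le> norm z + 1"
      using near norm_triangle_sub[of "y ** h" z] by (simp add: e_def dist_norm)
    then have "32 * norm (y ** h) * dist (y ** h') (y ** h) \<le>
        32 * (norm z + 1) * dist (y ** h') (y ** h)"
      by (simp add: mult_right_mono)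
    also have "\<dots> < 32 * (norm z + 1) * (2 * e)"
      using near dist_triangle3[of "y ** h'" "y ** h" z] \<open>norm z + 1 > 0\<close>
      by (simp add: dist_commute)
    also have "\<dots> \<le> e0" using \<open>64 * (norm z + 1) * e \<le> e0\<close> by (simp add: algebra_simps)
    finally have "32 * norm (y ** h) * dist (y ** h') (y ** h) < e0" .
    then have "dist (matrix_inv h ** h') (mat 1) < e0"
      using dist_matrix_inv_mult_le[of "y ** h" "y ** h'"] y \<open>det h = 1\<close> by (simp add: k det_mul)
    then have "matrix_inv h ** h' = mat 1 \<or> matrix_inv h ** h' = - mat 1"
      using e0 h h' gen_group.mult gen_group_matrix_inv[OF dets] by blast
    moreover have "h ** (matrix_inv h ** h') = h'"
      using \<open>det h = 1\<close> by (simp add: matrix_mul_assoc matrix_inv_right)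
    ultimately show ?thesis by (auto simp: matrix_mul_uminus_right)
  qed
  with \<open>e > 0\<close> show ?thesis by blast
qed

lemma finite_near_coset:
  assumes "discrete_PSL (gen_group S)" and "\<forall>s\<in>S. det s = 1" and "det y = 1"
  obtains e where "e > 0" "finite {h \<in> gen_group S. dist (y ** h) z < e}"
proof -
  obtain e where "e > 0" and pm: "\<forall>h\<in>gen_group S. \<forall>h'\<in>gen_group S.
      dist (y ** h) z < e \<longrightarrow> dist (y ** h') z < e \<longrightarrow> h' = h \<or> h' = - h"
    using near_coset_unique_up_to_sign[OF assms] by blast
  define N where "N = {h \<in> gen_group S. dist (y ** h) z < e}"
  have "finite N"
  proof (cases "N = {}")
    case False
    then obtain h where "h \<in> N" by blast
    then have "N \<subseteq> {h, - h}" using pm by (auto simp: N_def)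
    then show ?thesis by (rule finite_subset) simp
  qed simp
  with \<open>e > 0\<close> show thesis by (intro that) (simp_all add: N_def)
qed

lemma discrete_PSL_two_cosets:
  assumes "discrete_PSL (gen_group S)" and "\<forall>s\<in>S. det s = 1" and "det \<psi> = 1"
    and G: "G \<subseteq> gen_group S \<union> (\<lambda>h. \<psi> ** h) ` gen_group S"
  shows "discrete_PSL G"
proof (rule discrete_PSL_if_locally_finite)
  fix z
  obtain e1 where "e1 > 0" and fin1: "finite {h \<in> gen_group S. dist (mat 1 ** h) z < e1}"
    by (rule finite_near_coset[OF assms(1,2) det_I])
  obtain e2 where "e2 > 0" and fin2: "finite {h \<in> gen_group S. dist (\<psi> ** h) z < e2}"
    by (rule finite_near_coset[OF assms(1-3)])
  have "{x\<in>G. dist x z < min e1 e2} \<subseteq> {h \<in> gen_group S. dist (mat 1 ** h) z < e1}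
      \<union> (\<lambda>h. \<psi> ** h) ` {h \<in> gen_group S. dist (\<psi> ** h) z < e2}"
    using G by auto
  then have "finite {x\<in>G. dist x z < min e1 e2}"
    using fin1 fin2 by (meson finite_UnI finite_imageI finite_subset)
  then show "\<exists>e>0. finite {x\<in>G. dist x z < e}" using \<open>e1 > 0\<close> \<open>e2 > 0\<close>
    by (intro exI[of _ "min e1 e2"]) simp
qed

lemma trace_zero_twist:
  assumes "det A = 1" "(trace A)^2 = 4" "det W = 1" "gamma A W \<noteq> 0"
  obtains \<psi> where "det \<psi> = 1" "trace \<psi> = 0" "gamma A \<psi> = gamma A W"
    "\<psi> ** A ** matrix_inv \<psi> = W ** A ** matrix_inv W"
proof -
  obtain p q r where pqr: "p^2 + q*r = 0" and A: "A = unipotent p q r 1 \<or> A = - unipotent p q r 1"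
    using parabolic_normal_form[OF assms(1,2)] by blast
  define L where "L = nil_trace p q r W"
  define U where "U = unipotent p q r (- trace W / L)"
  have gW: "gamma A W = L^2" unfolding L_def by (rule gamma_parabolic[OF pqr A assms(3)])
  then have "L \<noteq> 0" using assms(4) by simp
  have dU: "det U = 1" unfolding U_def by (rule det_unipotent[OF pqr])
  have "U ** A = A ** U"
    using A by (auto simp: U_def unipotent_mult_unipotent[OF pqr] add.commute
        matrix_mul_uminus_left matrix_mul_uminus_right)
  have "(W ** U) ** A ** matrix_inv (W ** U) = W ** (U ** A) ** matrix_inv U ** matrix_inv W"
    using assms(3) dU by (simp add: matrix_inv_mult matrix_mul_assoc)
  also have "\<dots> = W ** A ** (U ** matrix_inv U) ** matrix_inv W"
    unfolding \<open>U ** A = A ** U\<close> by (simp add: matrix_mul_assoc)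
  also have "\<dots> = W ** A ** matrix_inv W"
    using dU by (simp add: matrix_inv_right)
  finally have "(W ** U) ** A ** matrix_inv (W ** U) = W ** A ** matrix_inv W" .
  moreover have "det (W ** U) = 1" using assms(3) dU by (simp add: det_mul)
  moreover have "trace (W ** U) = 0"
    using \<open>L \<noteq> 0\<close> by (simp add: U_def trace_mult_unipotent L_def[symmetric])
  moreover have "gamma A (W ** U) = gamma A W"
    using gamma_parabolic[OF pqr A \<open>det (W ** U) = 1\<close>] gW
    by (simp add: U_def nil_trace_unipotent(2)[OF pqr] L_def)
  ultimately show ?thesis by (intro that)
qed

lemma involution_conj:
  fixes \<psi> A C :: cmat
  assumes sq: "\<psi> ** \<psi> = - mat 1" and conj: "\<psi> ** A ** matrix_inv \<psi> = C"
  shows "\<psi> ** A ** \<psi> = - C" and "\<psi> ** C ** \<psi> = - A"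
proof -
  have "matrix_inv \<psi> = - \<psi>"
    by (rule matrix_inv_eqI) (simp add: matrix_mul_uminus_right sq)
  then have "- (\<psi> ** A ** \<psi>) = C"
    using conj by (simp add: matrix_mul_uminus_right)
  then show \<psi>A: "\<psi> ** A ** \<psi> = - C" by (metis minus_minus)
  have "\<psi> ** C ** \<psi> = - (\<psi> ** (\<psi> ** A ** \<psi>) ** \<psi>)"
    by (simp add: \<psi>A matrix_mul_uminus_left matrix_mul_uminus_right)
  also have "\<dots> = - ((\<psi> ** \<psi>) ** A ** (\<psi> ** \<psi>))"
    by (simp add: matrix_mul_assoc)
  also have "\<dots> = - A"
    by (simp add: sq matrix_mul_uminus_left matrix_mul_uminus_right)
  finally show "\<psi> ** C ** \<psi> = - A" .
qed

lemma discrete_rep_twist: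
  assumes dA: "det A = 1" and dB: "det B = 1" and tB: "trace B = 0"
    and W: "W \<in> gen_group {A, B}"
    and d\<psi>: "det \<psi> = 1" and t\<psi>: "trace \<psi> = 0"
    and conj: "\<psi> ** A ** matrix_inv \<psi> = W ** A ** matrix_inv W"
    and disc: "discrete_rep A B"
  shows "discrete_rep A \<psi>"
proof -
  define C where "C = W ** A ** matrix_inv W"
  define S where "S = {A, C, - mat 1}"
  have dW: "det W = 1" using gen_group_det[OF _ W] dA dB by simp
  have dets: "\<forall>s\<in>S. det s = 1"
    using dA dW by (simp add: S_def C_def det_mul det_matrix_inv mat_1_eq_mat2)
  have "B ** B \<in> gen_group {A, B}" by (simp add: gen_group.gen gen_group.mult)
  then have "S \<subseteq> gen_group {A, B}"
    using W gen_group_matrix_inv[OF _ W] dA dB mult_self_eq_minus_1[OF tB dB]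
    by (auto simp: S_def C_def intro: gen_group.intros)
  then have "gen_group S \<subseteq> gen_group {A, B}"
    using dA dB by (intro gen_group_subset) auto
  then have discS: "discrete_PSL (gen_group S)"
    using disc unfolding discrete_rep_def by (rule discrete_PSL_subset)
  have sq: "\<psi> ** \<psi> = - mat 1" by (rule mult_self_eq_minus_1[OF t\<psi> d\<psi>])
  note \<psi>A\<psi>C = involution_conj[OF sq conj[folded C_def]]
  have neg: "- mat 1 \<in> gen_group S" by (simp add: S_def gen_group.gen)
  have "\<forall>s\<in>S. \<psi> ** s ** \<psi> \<in> gen_group S"
    using \<psi>A\<psi>C uminus_in_gen_group[OF neg]
    by (auto simp: S_def sq matrix_mul_uminus_left matrix_mul_uminus_right intro: gen_group.intros)
  then have "gen_group {A, \<psi>} \<subseteq> gen_group S \<union> (\<lambda>h. \<psi> ** h) ` gen_group S"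
    using gen_group_involution_cosets[OF dets sq neg] gen_group_conj_involution[OF dets sq neg]
    by (simp add: S_def gen_group.gen)
  then show ?thesis
    unfolding discrete_rep_def by (rule discrete_PSL_two_cosets[OF discS dets d\<psi>])
qed

lemma exists_discrete_rep_principal_char_0:
  obtains A' B' :: cmat where "det A' = 1" "det B' = 1" "principal_char A' B' = (0, 0, -4)"
    "discrete_rep A' B'"
proof -
  define J where "J = mat2 \<i> 0 0 (-\<i>)"
  have inv: "matrix_inv (mat 1 :: cmat) = mat 1" "matrix_inv J = - J"
    by (simp_all add: J_def matrix_inv_eqI mat_1_eq_mat2)
  have "g \<in> {mat 1, - mat 1, J, - J}" if "g \<in> gen_group {mat 1, J}" for g
    using that
  proof induction
    case (mult g h)
    then show ?case by (auto simp: J_def mat_1_eq_mat2)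
  qed (use inv in auto)
  then have "gen_group {mat 1, J} \<subseteq> {mat 1, - mat 1, J, - J}" by blast
  then have "discrete_rep (mat 1) J"
    unfolding discrete_rep_def by (rule discrete_PSL_subset) (simp add: discrete_PSL_finite)
  moreover have "gamma (mat 1) J = 0"
    using inv by (simp add: gamma_def commutator_def J_def)
  then have "principal_char (mat 1) J = (0, 0, -4)"
    by (simp add: principal_char_def J_def mat_1_eq_mat2)
  moreover have "det (mat 1 :: cmat) = 1" "det J = 1" by (simp_all add: det_I J_def)
  ultimately show thesis using that by blast
qed

theorem theorem8:
  fixes A B :: cmat and \<gamma> :: complex and w :: "int list"
  assumes "det A = 1" and "det B = 1"
    and "irreducible_rep A B"
    and "principal_char A B = (\<gamma>, 0, -4)"
    and "good_word w"
  shows "\<exists>A' B' :: cmat. det A' = 1 \<and> det B' = 1 \<and>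
           principal_char A' B' = (poly (map_poly of_int (word_poly w)) \<gamma>, 0, -4) \<and>
           (discrete_rep A B \<longrightarrow> discrete_rep A' B')"
proof -
  have \<gamma>: "gamma A B = \<gamma>" and trA: "(trace A)^2 = 4" and trB: "trace B = 0"
    using assms(4) by (simp_all add: principal_char_def)
  have "w \<noteq> []" using assms(5) by (auto simp: good_word_def)
  define W where "W = word_eval w A B"
  have gW: "gamma A W = poly (map_poly of_int (word_poly w)) \<gamma>"
    unfolding W_def \<gamma>[symmetric]
    by (rule gamma_word_eval_word_poly[OF assms(1) trA assms(2) trB \<open>w \<noteq> []\<close>])
  show ?thesis
  proof (cases "gamma A W = 0")
    case True
    with gW show ?thesis using exists_discrete_rep_principal_char_0 by metis
  next
    case False
    moreover have "det W = 1" unfolding W_def by (rule det_word_eval[OF assms(1,2)])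
    ultimately obtain \<psi> where \<psi>: "det \<psi> = 1" "trace \<psi> = 0" "gamma A \<psi> = gamma A W"
      "\<psi> ** A ** matrix_inv \<psi> = W ** A ** matrix_inv W"
      using trace_zero_twist[OF assms(1) trA] by blast
    have "W \<in> gen_group {A, B}"
      unfolding W_def using assms(1,2)
      by (intro word_eval_in_gen_group) (auto intro: gen_group.intros)
    then have "discrete_rep A B \<longrightarrow> discrete_rep A \<psi>"
      using discrete_rep_twist[OF assms(1,2) trB _ \<psi>(1,2,4)] by blast
    moreover have "principal_char A \<psi> = (poly (map_poly of_int (word_poly w)) \<gamma>, 0, -4)"
      using \<psi>(2,3) gW trA by (simp add: principal_char_def)
    ultimately show ?thesis using assms(1) \<psi>(1) by blast
  qed
qed

end
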